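(* Let $S \geq 1$ and, for $i = 1,\dots,S$, let $\boldsymbol{M}_i \in \mathbb{R}^{m_i \times m_i}$ be symmetric positive definite, let $\boldsymbol{K}_i \in \mathbb{R}^{m_i \times m_i}$ be symmetric positive semidefinite, and let $\boldsymbol{C}_i \in \mathbb{R}^{p \times m_i}$ be signed Boolean matrices such that $[\boldsymbol{C}_1 \ \cdots \ \boldsymbol{C}_S]$ has full row rank $p$. Let $0 < \gamma \leq 1$ and $\Delta t > 0$, and if $\gamma < 1/2$ assume in addition that $\Delta t \, (1-2\gamma)\, \omega_i^{\max} < 2$ for every $i$, where $\omega_i^{\max}$ is the largest eigenvalue of the generalized eigenvalue problem $\boldsymbol{K}_i \boldsymbol{\phi} = \omega \boldsymbol{M}_i \boldsymbol{\phi}$. Suppose that vectors $\boldsymbol{d}_i^{(n)} \in \mathbb{R}^{m_i}$ ($n \geq 0$), $\boldsymbol{v}_i^{(n+\gamma)} \in \mathbb{R}^{m_i}$ ($n\ge0$) and $\boldsymbol{\lambda}^{(n+\gamma)} \in \mathbb{R}^p$ ($n \ge 0$) satisfy, for all $n \geq 0$ and all $i$ (the modified $\boldsymbol{d}$-continuity method with zero external forcing): $\boldsymbol{M}_i \boldsymbol{v}_i^{(n+\gamma)} + \boldsymbol{K}_i\left((1-\gamma)\boldsymbol{d}_i^{(n)} + \gamma \boldsymbol{d}_i^{(n+1)}\right) = \boldsymbol{C}_i^{\mathrm{T}} \boldsymbol{\lambda}^{(n+\gamma)}$, $\boldsymbol{d}_i^{(n+1)} = \boldsymbol{d}_i^{(n)}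 + \Delta t\, \boldsymbol{v}_i^{(n+\gamma)}$, and $\sum_{i=1}^S \boldsymbol{C}_i \boldsymbol{d}_i^{(n+1)} = \boldsymbol{0}$. Define, for $n \geq 0$, $\boldsymbol{v}_i^{(n+1)} := \gamma \boldsymbol{v}_i^{(n+\gamma)} + (1-\gamma)\boldsymbol{v}_i^{(n+1+\gamma)}$ and $\boldsymbol{\lambda}^{(n+1)} := \gamma \boldsymbol{\lambda}^{(n+\gamma)} + (1-\gamma)\boldsymbol{\lambda}^{(n+1+\gamma)}$. Then the sequences $(\boldsymbol{d}_i^{(n)})_n$, $(\boldsymbol{v}_i^{(n+\gamma)})_n$, $(\boldsymbol{\lambda}^{(n+\gamma)})_n$, $(\boldsymbol{v}_i^{(n+1)})_n$ and $(\boldsymbol{\lambda}^{(n+1)})_n$ are all bounded.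
   Context: A signed Boolean matrix is a matrix whose entries are in $\{-1,0,+1\}$ and each of whose rows has at most one nonzero entry. A sequence of vectors is bounded if there is a constant $C$ independent of $n$ with $\|\boldsymbol{x}^{(n)}\| < C$ for all $n$. The condition on $\Delta t$ for $\gamma<1/2$ is that $\Delta t$ be smaller than the critical time step $2/(\omega_i^{\max}(1-2\gamma))$ of each unconstrained subdomain (no restriction when $\omega_i^{\max}=0$ or $\gamma \ge 1/2$). *)

theory Defs
  imports "Jordan_Normal_Form.Matrix" "Jordan_Normal_Form.DL_Rank"
begin

definition sym_mat :: "real mat \<Rightarrow> bool" where
  "sym_mat A \<longleftrightarrow> square_mat A \<and> transpose_mat A = A"

definition pos_def_mat :: "real mat \<Rightarrow> bool" where
  "pos_def_mat A \<longleftrightarrow> sym_mat A \<and>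
     (\<forall>x \<in> carrier_vec (dim_row A). x \<noteq> 0\<^sub>v (dim_row A) \<longrightarrow> x \<bullet> (A *\<^sub>v x) > 0)"

definition pos_semidef_mat :: "real mat \<Rightarrow> bool" where
  "pos_semidef_mat A \<longleftrightarrow> sym_mat A \<and>
     (\<forall>x \<in> carrier_vec (dim_row A). x \<bullet> (A *\<^sub>v x) \<ge> 0)"

definition signed_boolean_mat :: "real mat \<Rightarrow> bool" where
  "signed_boolean_mat A \<longleftrightarrow>
     (\<forall>r < dim_row A. \<forall>c < dim_col A. A $$ (r,c) \<in> {-1, 0, 1}) \<and>
     (\<forall>r < dim_row A. \<forall>c1 < dim_col A. \<forall>c2 < dim_col A.
        A $$ (r,c1) \<noteq> 0 \<longrightarrow> A $$ (r,c2) \<noteq> 0 \<longrightarrow> c1 = c2)"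

text \<open>Horizontal block concatenation [C_0 ... C_{S-1}] of p-row matrices.\<close>
definition hblock :: "nat \<Rightarrow> nat \<Rightarrow> (nat \<Rightarrow> real mat) \<Rightarrow> real mat" where
  "hblock p S C = mat_of_cols p (concat (map (\<lambda>i. cols (C i)) [0..<S]))"

definition gen_eigenvalues :: "real mat \<Rightarrow> real mat \<Rightarrow> real set" where
  "gen_eigenvalues K M = {\<omega>. \<exists>\<phi> \<in> carrier_vec (dim_row K).
      \<phi> \<noteq> 0\<^sub>v (dim_row K) \<and> K *\<^sub>v \<phi> = \<omega> \<cdot>\<^sub>v (M *\<^sub>v \<phi>)}"

definition omega_max :: "real mat \<Rightarrow> real mat \<Rightarrow> real" where
  "omega_max K M = Max (gen_eigenvalues K M)"

definition vnorm :: "real vec \<Rightarrow> real" where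
  "vnorm x = sqrt (x \<bullet> x)"

definition bounded_seq :: "(nat \<Rightarrow> real vec) \<Rightarrow> bool" where
  "bounded_seq x \<longleftrightarrow> (\<exists>B. \<forall>n. vnorm (x n) < B)"

end

theory Submission
  imports Defs "HOL-Analysis.Function_Topology" "Jordan_Normal_Form.Char_Poly"
begin

text \<open>The proof is an energy argument. Testing the equation of motion of subdomain \<open>i\<close> with
  \<open>\<theta>\<^sub>i = (1 - \<gamma>) d\<^sub>i\<^sup>(\<^sup>n\<^sup>) + \<gamma> d\<^sub>i\<^sup>(\<^sup>n\<^sup>+\<^sup>1\<^sup>)\<close> and with \<open>v\<^sub>i\<^sup>(\<^sup>n\<^sup>+\<^sup>\<gamma>\<^sup>)\<close>, and using that the multipliers
  do no work once the constraint holds at two consecutive steps, shows that the discrete energy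
  \<open>\<Sum>\<^sub>i \<langle>M\<^sub>i d\<^sub>i\<^sup>(\<^sup>n\<^sup>), d\<^sub>i\<^sup>(\<^sup>n\<^sup>)\<rangle>\<close> is nonincreasing for \<open>n \<ge> 1\<close>. For \<open>\<gamma> < 1/2\<close> the
  numerical anti-dissipation \<open>(\<gamma> - 1/2) \<Delta>t \<langle>M v, v\<rangle>\<close> is absorbed by the stiffness term, via
  \<open>\<langle>K x, x\<rangle> \<le> \<omega>\<^sup>m\<^sup>a\<^sup>x \<langle>M x, x\<rangle>\<close> and the CFL condition; that bound comes from maximising the
  Rayleigh quotient on the compact unit sphere, a maximiser being a generalized eigenvector.
  Positive definiteness of \<open>M\<^sub>i\<close> then bounds the displacements, hence the velocities (difference
  quotients), hence \<open>C\<^sub>i\<^sup>T \<lambda> = M\<^sub>i v\<^sub>i + K\<^sub>i \<theta>\<^sub>i\<close>, and full row rank of \<open>[C\<^sub>1 \<dots> C\<^sub>S]\<close>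
  bounds \<open>\<lambda>\<close>.\<close>

section \<open>Quadratic forms of matrices\<close>

definition mat_form :: "real mat \<Rightarrow> real vec \<Rightarrow> real vec \<Rightarrow> real" where
  "mat_form A x y = x \<bullet> (A *\<^sub>v y)"

lemma scalar_prod_self_nonneg: "0 \<le> (x :: real vec) \<bullet> x"
  using conjugate_square_ge_0_vec[of x] by simp

lemma scalar_prod_self_eq_0_iff: "(x :: real vec) \<in> carrier_vec n \<Longrightarrow> x \<bullet> x = 0 \<longleftrightarrow> x = 0\<^sub>v n"
  using conjugate_square_eq_0_vec[of x n] by simp

lemma sym_mat_transpose: "sym_mat A \<Longrightarrow> transpose_mat A = A"
  unfolding sym_mat_def by simp

lemma pos_def_mat_imp_pos_semidef_mat:
  assumes "pos_def_mat A" shows "pos_semidef_mat A"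
proof -
  have "0 \<le> x \<bullet> (A *\<^sub>v x)" if "x \<in> carrier_vec (dim_row A)" for x
    using assms that unfolding pos_def_mat_def
    by (cases "x = 0\<^sub>v (dim_row A)") (auto simp: scalar_prod_def intro: less_imp_le)
  then show ?thesis using assms unfolding pos_def_mat_def pos_semidef_mat_def by blast
qed

context
  fixes A :: "real mat" and m :: nat
  assumes A: "A \<in> carrier_mat m m"
begin

lemma mat_form_add_left:
  "x \<in> carrier_vec m \<Longrightarrow> y \<in> carrier_vec m \<Longrightarrow> z \<in> carrier_vec m \<Longrightarrow>
   mat_form A (x + y) z = mat_form A x z + mat_form A y z"
  unfolding mat_form_def using A by (simp add: add_scalar_prod_distrib[of _ m])

lemma mat_form_add_right:
  "x \<in> carrier_vec m \<Longrightarrow> y \<in> carrier_vec m \<Longrightarrow> z \<in> carrier_vec m \<Longrightarrow>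
   mat_form A x (y + z) = mat_form A x y + mat_form A x z"
  unfolding mat_form_def using A
  by (simp add: mult_add_distrib_mat_vec[OF A] scalar_prod_add_distrib[of _ m])

lemma mat_form_smult_left:
  "x \<in> carrier_vec m \<Longrightarrow> z \<in> carrier_vec m \<Longrightarrow> mat_form A (c \<cdot>\<^sub>v x) z = c * mat_form A x z"
  unfolding mat_form_def using A by (simp add: smult_scalar_prod_distrib[of _ m])

lemma mat_form_smult_right:
  "x \<in> carrier_vec m \<Longrightarrow> z \<in> carrier_vec m \<Longrightarrow> mat_form A x (c \<cdot>\<^sub>v z) = c * mat_form A x z"
  unfolding mat_form_def using A by (simp add: mult_mat_vec[OF A] scalar_prod_smult_distrib[of _ m])

lemma mat_form_zero: "mat_form A (0\<^sub>v m) (0\<^sub>v m) = 0"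
  unfolding mat_form_def using A by simp

lemma mat_form_commute:
  assumes "sym_mat A" "x \<in> carrier_vec m" "y \<in> carrier_vec m"
  shows "mat_form A x y = mat_form A y x"
proof -
  have "(transpose_mat A *\<^sub>v x) \<bullet> y = x \<bullet> (A *\<^sub>v y)"
    by (rule transpose_vec_mult_scalar[OF A assms(3,2)])
  moreover have "(A *\<^sub>v x) \<bullet> y = y \<bullet> (A *\<^sub>v x)"
    using A assms by (intro comm_scalar_prod[of _ m]) auto
  ultimately show ?thesis unfolding mat_form_def sym_mat_transpose[OF assms(1)] by simp
qed

lemma mat_form_lincomb_self:
  assumes "sym_mat A" "x \<in> carrier_vec m" "y \<in> carrier_vec m"
  shows "mat_form A (a \<cdot>\<^sub>v x + b \<cdot>\<^sub>v y) (a \<cdot>\<^sub>v x + b \<cdot>\<^sub>v y)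
           = a\<^sup>2 * mat_form A x x + 2 * a * b * mat_form A x y + b\<^sup>2 * mat_form A y y"
  using mat_form_commute[OF assms(1) assms(3,2)] assms(2,3)
  by (simp add: mat_form_add_left mat_form_add_right mat_form_smult_left mat_form_smult_right
      algebra_simps power2_eq_square)

lemma mat_form_self_smult:
  "x \<in> carrier_vec m \<Longrightarrow> mat_form A (c \<cdot>\<^sub>v x) (c \<cdot>\<^sub>v x) = c\<^sup>2 * mat_form A x x"
  by (simp add: mat_form_smult_left mat_form_smult_right power2_eq_square)

lemma mat_form_as_sum:
  assumes "x \<in> carrier_vec m" "y \<in> carrier_vec m"
  shows "mat_form A x y = (\<Sum>j<m. \<Sum>k<m. x $ j * A $$ (j, k) * y $ k)"
  using A assms
  by (simp add: mat_form_def scalar_prod_def atLeast0LessThan sum_distrib_left mult.assoc)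

lemma pos_semidef_mat_form_nonneg:
  "pos_semidef_mat A \<Longrightarrow> x \<in> carrier_vec m \<Longrightarrow> 0 \<le> mat_form A x x"
  using A unfolding pos_semidef_mat_def mat_form_def by auto

lemma pos_def_mat_form_pos:
  "pos_def_mat A \<Longrightarrow> x \<in> carrier_vec m \<Longrightarrow> x \<noteq> 0\<^sub>v m \<Longrightarrow> 0 < mat_form A x x"
  using A unfolding pos_def_mat_def mat_form_def by auto

lemma pos_semidef_cross_term_le:
  assumes "pos_semidef_mat A" "x \<in> carrier_vec m" "y \<in> carrier_vec m" "s > 0"
  shows "- 2 * mat_form A x y \<le> s * mat_form A x x + mat_form A y y / s"
proof -
  have "0 \<le> mat_form A (s \<cdot>\<^sub>v x + 1 \<cdot>\<^sub>v y) (s \<cdot>\<^sub>v x + 1 \<cdot>\<^sub>v y)"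
    using assms by (intro pos_semidef_mat_form_nonneg) auto
  also have "\<dots> = s\<^sup>2 * mat_form A x x + 2 * s * mat_form A x y + mat_form A y y"
    using mat_form_lincomb_self[of x y s 1] assms pos_semidef_mat_def by simp
  also have "\<dots> = s * (s * mat_form A x x + 2 * mat_form A x y + mat_form A y y / s)"
    using \<open>s > 0\<close> by (simp add: power2_eq_square field_simps)
  finally show ?thesis using \<open>s > 0\<close> by (simp add: zero_le_mult_iff)
qed

end

lemma linear_coeff_zero_if_quadratic_nonneg:
  fixes a b :: real
  assumes "a \<ge> 0" and nonneg: "\<And>t. 0 \<le> 2 * t * b + t\<^sup>2 * a"
  shows "b = 0"
proof -
  define t where "t = - b / (a + 1)"
  have t: "t * (a + 1) = - b" unfolding t_def using \<open>a \<ge> 0\<close> by simp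
  have "0 \<le> (a + 1)\<^sup>2 * (2 * t * b + t\<^sup>2 * a)" using nonneg[of t] by simp
  also have "\<dots> = 2 * b * (a + 1) * (t * (a + 1)) + (t * (a + 1))\<^sup>2 * a"
    by (simp add: algebra_simps power2_eq_square)
  also have "\<dots> = - b\<^sup>2 * (a + 2)"
    unfolding t by (simp add: algebra_simps power2_eq_square)
  finally show ?thesis using \<open>a \<ge> 0\<close> by (simp add: mult_le_0_iff)
qed

lemma pos_semidef_form_zero_imp_kernel:
  assumes A: "A \<in> carrier_mat m m" "sym_mat A" and nonneg: "\<And>x. x \<in> carrier_vec m \<Longrightarrow> 0 \<le> mat_form A x x"
    and x0: "x0 \<in> carrier_vec m" "mat_form A x0 x0 = 0"
  shows "A *\<^sub>v x0 = 0\<^sub>v m"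
proof -
  define w where "w = A *\<^sub>v x0"
  have w: "w \<in> carrier_vec m" unfolding w_def using A x0 by simp
  have "mat_form A x0 w = 0"
  proof (rule linear_coeff_zero_if_quadratic_nonneg)
    show "0 \<le> mat_form A w w" by (rule nonneg[OF w])
    fix t
    have "0 \<le> mat_form A (1 \<cdot>\<^sub>v x0 + t \<cdot>\<^sub>v w) (1 \<cdot>\<^sub>v x0 + t \<cdot>\<^sub>v w)"
      using x0 w by (intro nonneg) auto
    then show "0 \<le> 2 * t * mat_form A x0 w + t\<^sup>2 * mat_form A w w"
      using mat_form_lincomb_self[OF A x0(1) w, of 1 t] x0 by simp
  qed
  moreover have "mat_form A x0 w = w \<bullet> w"
    using mat_form_commute[OF A x0(1) w] unfolding mat_form_def w_def by simp
  ultimately show ?thesis using scalar_prod_self_eq_0_iff[OF w] unfolding w_def by simp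
qed

section \<open>Generalized eigenvalues and the Rayleigh quotient\<close>

lemma continuous_map_mat_form:
  assumes A: "A \<in> carrier_mat m m"
  shows "continuous_map (product_topology (\<lambda>_. euclideanreal) {..<m}) euclideanreal
           (\<lambda>f. mat_form A (vec m f) (vec m f))"
proof -
  have "mat_form A (vec m f) (vec m f) = (\<Sum>j<m. \<Sum>k<m. f j * A $$ (j, k) * f k)" for f
    by (simp add: mat_form_as_sum[OF A])
  moreover have "continuous_map (product_topology (\<lambda>_. euclideanreal) {..<m}) euclideanreal
                   (\<lambda>f. \<Sum>j<m. \<Sum>k<m. f j * A $$ (j, k) * f k)"
    by (intro continuous_map_sum continuous_map_real_mult continuous_map_const[THEN iffD2]
        continuous_map_product_projection) auto
  ultimately show ?thesis by simp
qed

text \<open>Vectors of \<open>\<real>\<^sup>m\<close> are modelled as functions on \<open>{..<m}\<close>, so that compactness in the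
  product topology applies.\<close>
definition coord_unit_sphere :: "nat \<Rightarrow> (nat \<Rightarrow> real) set" where
  "coord_unit_sphere m = {f \<in> (\<Pi>\<^sub>E j\<in>{..<m}. {-1..1}). (\<Sum>j<m. (f j)\<^sup>2) = 1}"

lemma compactin_coord_unit_sphere:
  "compactin (product_topology (\<lambda>_. euclideanreal) {..<m}) (coord_unit_sphere m)"
proof -
  let ?X = "product_topology (\<lambda>_. euclideanreal) {..<m}"
  have "closedin ?X {f \<in> topspace ?X. (\<Sum>j<m. (f j)\<^sup>2) \<in> {1}}"
    by (intro closedin_continuous_map_preimage[where Y = euclideanreal] continuous_map_sum continuous_map_real_pow
        continuous_map_product_projection) auto
  moreover have "compactin ?X (\<Pi>\<^sub>E j\<in>{..<m}. {-1..1})"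
    by (simp add: compactin_PiE)
  ultimately have "compactin ?X ({f \<in> topspace ?X. (\<Sum>j<m. (f j)\<^sup>2) \<in> {1}} \<inter> (\<Pi>\<^sub>E j\<in>{..<m}. {-1..1}))"
    by (rule closed_Int_compactin)
  moreover have "{f \<in> topspace ?X. (\<Sum>j<m. (f j)\<^sup>2) \<in> {1}} \<inter> (\<Pi>\<^sub>E j\<in>{..<m}. {-1..1}) = coord_unit_sphere m"
    unfolding coord_unit_sphere_def by auto
  ultimately show ?thesis by simp
qed

lemma coord_unit_sphere_vec:
  assumes "f \<in> coord_unit_sphere m"
  shows "vec m f \<bullet> vec m f = 1"
  using assms unfolding coord_unit_sphere_def by (simp add: scalar_prod_def atLeast0LessThan power2_eq_square)

lemma restrict_in_coord_unit_sphere: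
  assumes x: "x \<in> carrier_vec m" "x \<bullet> x = 1"
  shows "restrict (($) x) {..<m} \<in> coord_unit_sphere m" and "vec m (restrict (($) x) {..<m}) = x"
proof -
  have sum: "(\<Sum>j<m. (x $ j)\<^sup>2) = 1"
    using x by (simp add: scalar_prod_def atLeast0LessThan power2_eq_square)
  have "(x $ j)\<^sup>2 \<le> 1" if "j < m" for j
    using member_le_sum[of j "{..<m}" "\<lambda>j. (x $ j)\<^sup>2"] that sum by simp
  then have "\<bar>x $ j\<bar> \<le> 1" if "j < m" for j
    using that abs_square_le_1 by blast
  then show "restrict (($) x) {..<m} \<in> coord_unit_sphere m"
    unfolding coord_unit_sphere_def using sum by (auto simp: abs_le_iff)
  show "vec m (restrict (($) x) {..<m}) = x" using x by (intro eq_vecI) auto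
qed

text \<open>Compactness of the unit sphere, and homogeneity of the quotient, give a maximiser.\<close>
lemma rayleigh_quotient_attains_max:
  assumes A: "A \<in> carrier_mat m m" and B: "B \<in> carrier_mat m m" and "0 < m"
    and B_pos: "\<And>x. x \<in> carrier_vec m \<Longrightarrow> x \<noteq> 0\<^sub>v m \<Longrightarrow> 0 < mat_form B x x"
  shows "\<exists>x0 \<in> carrier_vec m. x0 \<noteq> 0\<^sub>v m \<and> (\<forall>x \<in> carrier_vec m. x \<noteq> 0\<^sub>v m \<longrightarrow>
           mat_form A x x / mat_form B x x \<le> mat_form A x0 x0 / mat_form B x0 x0)"
proof -
  let ?X = "product_topology (\<lambda>_. euclideanreal) {..<m}"
  let ?Sph = "coord_unit_sphere m"
  define R where "R x = mat_form A x x / mat_form B x x" for x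
  have nonzero: "vec m f \<noteq> 0\<^sub>v m" if "f \<in> ?Sph" for f
    using coord_unit_sphere_vec[OF that] by auto
  then have denom_nonzero: "mat_form B (vec m f) (vec m f) \<noteq> 0" if "f \<in> ?Sph" for f
    using B_pos[of "vec m f"] that by fastforce
  have "continuous_map (subtopology ?X ?Sph) euclideanreal (\<lambda>f. R (vec m f))"
    unfolding R_def
  proof (rule continuous_map_real_divide)
    show "continuous_map (subtopology ?X ?Sph) euclideanreal (\<lambda>f. mat_form A (vec m f) (vec m f))"
      by (rule continuous_map_from_subtopology[OF continuous_map_mat_form[OF A]])
    show "continuous_map (subtopology ?X ?Sph) euclideanreal (\<lambda>f. mat_form B (vec m f) (vec m f))"
      by (rule continuous_map_from_subtopology[OF continuous_map_mat_form[OF B]])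
  qed (use denom_nonzero in simp)
  moreover have "compactin (subtopology ?X ?Sph) ?Sph"
    by (simp add: compactin_subtopology compactin_coord_unit_sphere)
  ultimately have "compactin euclideanreal ((\<lambda>f. R (vec m f)) ` ?Sph)"
    by (rule image_compactin[rotated])
  moreover have "restrict (($) (unit_vec m 0)) {..<m} \<in> ?Sph"
    using \<open>0 < m\<close> by (intro restrict_in_coord_unit_sphere) auto
  ultimately obtain f0 where f0: "f0 \<in> ?Sph" "\<And>f. f \<in> ?Sph \<Longrightarrow> R (vec m f) \<le> R (vec m f0)"
    using compact_attains_sup[of "(\<lambda>f. R (vec m f)) ` ?Sph"] by auto
  have "R x \<le> R (vec m f0)" if x: "x \<in> carrier_vec m" "x \<noteq> 0\<^sub>v m" for x
  proof -
    define c where "c = 1 / sqrt (x \<bullet> x)"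
    have pos: "0 < x \<bullet> x" using x scalar_prod_self_nonneg[of x] scalar_prod_self_eq_0_iff[OF x(1)]
      by fastforce
    have "(c \<cdot>\<^sub>v x) \<bullet> (c \<cdot>\<^sub>v x) = 1"
      using x pos by (simp add: c_def smult_scalar_prod_distrib[of _ m] scalar_prod_smult_distrib[of _ m])
    then have "R (c \<cdot>\<^sub>v x) \<le> R (vec m f0)"
      using restrict_in_coord_unit_sphere[of "c \<cdot>\<^sub>v x" m] x f0(2) by (metis smult_carrier_vec)
    moreover have "c \<noteq> 0" using pos by (simp add: c_def)
    then have "R (c \<cdot>\<^sub>v x) = R x"
      unfolding R_def using x by (simp add: mat_form_self_smult[OF A] mat_form_self_smult[OF B])
    ultimately show ?thesis by simp
  qed
  moreover have "vec m f0 \<in> carrier_vec m" "vec m f0 \<noteq> 0\<^sub>v m" using nonzero[OF f0(1)] by auto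
  ultimately show ?thesis unfolding R_def by blast
qed

lemma pos_def_mat_coercive:
  assumes M: "M \<in> carrier_mat m m" "pos_def_mat M"
  shows "\<exists>c > 0. \<forall>x \<in> carrier_vec m. x \<bullet> x \<le> c * mat_form M x x"
proof (cases "m = 0")
  case True
  have "x \<bullet> x \<le> 1 * mat_form M x x" if "x \<in> carrier_vec m" for x
    using that True pos_semidef_mat_form_nonneg[OF M(1) pos_def_mat_imp_pos_semidef_mat[OF M(2)] that]
    by (simp add: scalar_prod_def)
  then show ?thesis by (intro exI[of _ 1]) auto
next
  case False
  have M_pos: "\<And>x. x \<in> carrier_vec m \<Longrightarrow> x \<noteq> 0\<^sub>v m \<Longrightarrow> 0 < mat_form M x x"
    using pos_def_mat_form_pos[OF M(1) M(2)] by blast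
  have id_form: "mat_form (1\<^sub>m m) x x = x \<bullet> x" if "x \<in> carrier_vec m" for x
    using that by (simp add: mat_form_def)
  obtain x0 where x0: "x0 \<in> carrier_vec m" "x0 \<noteq> 0\<^sub>v m"
    and max: "\<And>x. x \<in> carrier_vec m \<Longrightarrow> x \<noteq> 0\<^sub>v m \<Longrightarrow>
                 mat_form (1\<^sub>m m) x x / mat_form M x x \<le> mat_form (1\<^sub>m m) x0 x0 / mat_form M x0 x0"
    using rayleigh_quotient_attains_max[OF one_carrier_mat M(1)] False M_pos by blast
  define c where "c = (x0 \<bullet> x0) / mat_form M x0 x0"
  have "c > 0" unfolding c_def using x0 M_pos scalar_prod_self_nonneg[of x0]
      scalar_prod_self_eq_0_iff[OF x0(1)] by (simp add: order_le_less)
  moreover have "x \<bullet> x \<le> c * mat_form M x x" if x: "x \<in> carrier_vec m" for x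
  proof (cases "x = 0\<^sub>v m")
    case True then show ?thesis by (simp add: mat_form_zero[OF M(1)])
  next
    case False
    then show ?thesis
      using max[OF x False] M_pos[OF x False] id_form x x0(1) unfolding c_def
      by (simp add: divide_le_eq)
  qed
  ultimately show ?thesis by blast
qed

lemma pos_def_mat_invertible:
  assumes M: "M \<in> carrier_mat m m" "pos_def_mat M"
  shows "\<exists>N \<in> carrier_mat m m. M * N = 1\<^sub>m m \<and> N * M = 1\<^sub>m m"
proof -
  have "det M \<noteq> 0"
  proof
    assume "det M = 0"
    then obtain v where v: "v \<in> carrier_vec m" "v \<noteq> 0\<^sub>v m" "M *\<^sub>v v = 0\<^sub>v m"
      using det_0_iff_vec_prod_zero_field[OF M(1)] by auto
    then show False using pos_def_mat_form_pos[OF M v(1,2)] by (simp add: mat_form_def)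
  qed
  from det_non_zero_imp_unit[OF M(1) this]
  show ?thesis unfolding Units_def ring_mat_def by auto
qed

text \<open>With \<open>N = M\<^sup>-\<^sup>1\<close>, generalized eigenvalues are eigenvalues of \<open>N * K\<close>.\<close>
lemma gen_eigenvalues_finite:
  assumes M: "M \<in> carrier_mat m m" "pos_def_mat M" and K: "K \<in> carrier_mat m m"
  shows "finite (gen_eigenvalues K M)"
proof -
  obtain N where N: "N \<in> carrier_mat m m" "N * M = 1\<^sub>m m" using pos_def_mat_invertible[OF M] by auto
  have NK: "N * K \<in> carrier_mat m m" using N K by auto
  have "gen_eigenvalues K M \<subseteq> {\<omega>. poly (char_poly (N * K)) \<omega> = 0}"
  proof
    fix \<omega> assume "\<omega> \<in> gen_eigenvalues K M"
    then obtain \<phi> where \<phi>: "\<phi> \<in> carrier_vec m" "\<phi> \<noteq> 0\<^sub>v m" "K *\<^sub>v \<phi> = \<omega> \<cdot>\<^sub>v (M *\<^sub>v \<phi>)"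
      unfolding gen_eigenvalues_def using K by auto
    have "N *\<^sub>v (M *\<^sub>v \<phi>) = \<phi>"
      using assoc_mult_mat_vec[OF N(1) M(1) \<phi>(1)] N(2) \<phi>(1) by simp
    then have "(N * K) *\<^sub>v \<phi> = \<omega> \<cdot>\<^sub>v \<phi>"
      using N M K \<phi> by (simp add: assoc_mult_mat_vec mult_mat_vec)
    then have "eigenvector (N * K) \<phi> \<omega>"
      unfolding eigenvector_def using \<phi> NK by auto
    then show "\<omega> \<in> {\<omega>. poly (char_poly (N * K)) \<omega> = 0}"
      using eigenvalue_root_char_poly[OF NK] eigenvalue_def by blast
  qed
  moreover have "char_poly (N * K) \<noteq> 0" using degree_monic_char_poly[OF NK] by auto
  ultimately show ?thesis using poly_roots_finite finite_subset by blast
qed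

text \<open>If \<open>x0 \<noteq> 0\<close> attains the bound \<open>K \<le> s M\<close> of forms, then \<open>s M - K\<close> is a positive
  semidefinite form vanishing at \<open>x0\<close>, so \<open>x0\<close> is in its kernel.\<close>
lemma rayleigh_bound_attained_imp_gen_eigenvalue:
  assumes M: "M \<in> carrier_mat m m" "sym_mat M" and K: "K \<in> carrier_mat m m" "sym_mat K"
    and le: "\<And>x. x \<in> carrier_vec m \<Longrightarrow> mat_form K x x \<le> s * mat_form M x x"
    and x0: "x0 \<in> carrier_vec m" "x0 \<noteq> 0\<^sub>v m" "mat_form K x0 x0 = s * mat_form M x0 x0"
  shows "s \<in> gen_eigenvalues K M"
proof -
  define A where "A = s \<cdot>\<^sub>m M - K"
  have A: "A \<in> carrier_mat m m" unfolding A_def by (rule minus_carrier_mat[OF K(1)])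
  have "transpose_mat (s \<cdot>\<^sub>m M) = s \<cdot>\<^sub>m transpose_mat M"
    by (intro eq_matI) auto
  then have "transpose_mat A = A"
    unfolding A_def using M K transpose_minus[of "s \<cdot>\<^sub>m M" m m K] by (simp add: sym_mat_transpose)
  then have "sym_mat A" using A unfolding sym_mat_def by simp
  have A_mult: "A *\<^sub>v x = s \<cdot>\<^sub>v (M *\<^sub>v x) - K *\<^sub>v x" if "x \<in> carrier_vec m" for x
  proof -
    have "(s \<cdot>\<^sub>m M) *\<^sub>v x = s \<cdot>\<^sub>v (M *\<^sub>v x)"
      using M that by (intro eq_vecI) (auto simp: scalar_prod_def sum_distrib_left ac_simps)
    then show ?thesis
      unfolding A_def using M K that minus_mult_distrib_mat_vec[of "s \<cdot>\<^sub>m M" m m K x] by simp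
  qed
  have form_A: "mat_form A x x = s * mat_form M x x - mat_form K x x" if "x \<in> carrier_vec m" for x
    unfolding mat_form_def A_mult[OF that] using M K that
    by (simp add: scalar_prod_minus_distrib[of _ m] scalar_prod_smult_distrib[of _ m])
  have "A *\<^sub>v x0 = 0\<^sub>v m"
    using le form_A x0 by (intro pos_semidef_form_zero_imp_kernel[OF A \<open>sym_mat A\<close>]) auto
  then have "(s \<cdot>\<^sub>v (M *\<^sub>v x0) - K *\<^sub>v x0) $ j = 0" if "j < m" for j
    unfolding A_mult[OF x0(1)] using that by simp
  then have "K *\<^sub>v x0 = s \<cdot>\<^sub>v (M *\<^sub>v x0)"
    using M K by (intro eq_vecI) auto
  then show ?thesis unfolding gen_eigenvalues_def using K x0 by auto
qed

lemma mat_form_le_omega_max: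
  assumes M: "M \<in> carrier_mat m m" "pos_def_mat M" and K: "K \<in> carrier_mat m m" "sym_mat K"
    and x: "x \<in> carrier_vec m"
  shows "mat_form K x x \<le> omega_max K M * mat_form M x x"
proof (cases "m = 0")
  case True
  then show ?thesis using M(1) K(1) x by (simp add: mat_form_as_sum)
next
  case False
  have M_pos: "\<And>x. x \<in> carrier_vec m \<Longrightarrow> x \<noteq> 0\<^sub>v m \<Longrightarrow> 0 < mat_form M x x"
    using pos_def_mat_form_pos[OF M] by blast
  obtain x0 where x0: "x0 \<in> carrier_vec m" "x0 \<noteq> 0\<^sub>v m"
    and max: "\<And>x. x \<in> carrier_vec m \<Longrightarrow> x \<noteq> 0\<^sub>v m \<Longrightarrow>
                 mat_form K x x / mat_form M x x \<le> mat_form K x0 x0 / mat_form M x0 x0"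
    using rayleigh_quotient_attains_max[OF K(1) M(1)] False M_pos by blast
  define s where "s = mat_form K x0 x0 / mat_form M x0 x0"
  have le: "mat_form K y y \<le> s * mat_form M y y" if y: "y \<in> carrier_vec m" for y
  proof (cases "y = 0\<^sub>v m")
    case True then show ?thesis by (simp add: mat_form_zero M(1) K(1))
  next
    case False then show ?thesis
      using max[OF y False] M_pos[OF y False] unfolding s_def by (simp add: divide_le_eq)
  qed
  have "s \<in> gen_eigenvalues K M"
    using M_pos[OF x0] pos_def_mat_def M(2)
    by (intro rayleigh_bound_attained_imp_gen_eigenvalue[OF M(1) _ K le x0]) (auto simp: s_def)
  then have "s \<le> omega_max K M"
    unfolding omega_max_def using gen_eigenvalues_finite[OF M K(1)] by simp
  moreover have "0 \<le> mat_form M x x"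
    using pos_semidef_mat_form_nonneg[OF M(1) pos_def_mat_imp_pos_semidef_mat[OF M(2)] x] .
  ultimately show ?thesis using le[OF x] by (meson mult_right_mono order_trans)
qed

section \<open>Bounded sequences of vectors\<close>

definition coord_bounded :: "nat \<Rightarrow> (nat \<Rightarrow> real vec) \<Rightarrow> bool" where
  "coord_bounded k x \<longleftrightarrow> (\<exists>B. \<forall>n j. j < k \<longrightarrow> \<bar>x n $ j\<bar> \<le> B)"

lemma scalar_prod_self_as_sum: "(x :: real vec) \<in> carrier_vec k \<Longrightarrow> x \<bullet> x = (\<Sum>j<k. (x $ j)\<^sup>2)"
  by (simp add: scalar_prod_def atLeast0LessThan power2_eq_square)

lemma bounded_seq_if_coord_bounded:
  assumes x: "\<And>n. x n \<in> carrier_vec k" and "coord_bounded k x"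
  shows "bounded_seq x"
proof -
  obtain B where B: "\<And>n j. j < k \<Longrightarrow> \<bar>x n $ j\<bar> \<le> B"
    using \<open>coord_bounded k x\<close> unfolding coord_bounded_def by blast
  have "vnorm (x n) \<le> sqrt (real k * B\<^sup>2)" for n
  proof -
    have "(x n $ j)\<^sup>2 \<le> B\<^sup>2" if "j < k" for j
      using B[OF that, of n] by (metis abs_ge_zero power2_abs power_mono)
    then have "(\<Sum>j<k. (x n $ j)\<^sup>2) \<le> (\<Sum>j<k. B\<^sup>2)" by (intro sum_mono) auto
    then show ?thesis unfolding vnorm_def scalar_prod_self_as_sum[OF x] by simp
  qed
  then have "vnorm (x n) < sqrt (real k * B\<^sup>2) + 1" for n by (smt (verit))
  then show ?thesis unfolding bounded_seq_def by blast
qed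

lemma coord_bounded_if_scalar_prod_self_bounded:
  assumes x: "\<And>n. x n \<in> carrier_vec k" and bound: "\<And>n. x n \<bullet> x n \<le> B"
  shows "coord_bounded k x"
  unfolding coord_bounded_def
proof (intro exI allI impI)
  fix n j assume "j < k"
  then have "(x n $ j)\<^sup>2 \<le> x n \<bullet> x n"
    unfolding scalar_prod_self_as_sum[OF x] by (intro member_le_sum) auto
  then have "(x n $ j)\<^sup>2 \<le> \<bar>B\<bar>" using bound[of n] by linarith
  then show "\<bar>x n $ j\<bar> \<le> sqrt \<bar>B\<bar>" using real_sqrt_le_mono by fastforce
qed

lemma coord_bounded_Suc_iff: "coord_bounded k (\<lambda>n. x (Suc n)) \<longleftrightarrow> coord_bounded k x"
proof
  assume "coord_bounded k (\<lambda>n. x (Suc n))"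
  then obtain B where B: "\<And>n j. j < k \<Longrightarrow> \<bar>x (Suc n) $ j\<bar> \<le> B"
    unfolding coord_bounded_def by blast
  have "\<bar>x n $ j\<bar> \<le> max B (Max ((\<lambda>j. \<bar>x 0 $ j\<bar>) ` {..<k}))" if "j < k" for n j
    using that B by (cases n) (auto simp: le_max_iff_disj)
  then show "coord_bounded k x" unfolding coord_bounded_def by blast
qed (auto simp: coord_bounded_def)

lemma coord_bounded_lincomb:
  assumes "coord_bounded k x" "coord_bounded k y"
    and z: "\<And>n j. j < k \<Longrightarrow> z n $ j = a * x n $ j + b * y n $ j"
  shows "coord_bounded k z"
proof -
  obtain Bx By where Bx: "\<And>n j. j < k \<Longrightarrow> \<bar>x n $ j\<bar> \<le> Bx" and By: "\<And>n j. j < k \<Longrightarrow> \<bar>y n $ j\<bar> \<le> By"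
    using assms(1,2) unfolding coord_bounded_def by blast
  have "\<bar>z n $ j\<bar> \<le> \<bar>a\<bar> * Bx + \<bar>b\<bar> * By" if "j < k" for n j
  proof -
    have "\<bar>z n $ j\<bar> \<le> \<bar>a\<bar> * \<bar>x n $ j\<bar> + \<bar>b\<bar> * \<bar>y n $ j\<bar>"
      unfolding z[OF that] by (metis abs_mult abs_triangle_ineq)
    also have "\<dots> \<le> \<bar>a\<bar> * Bx + \<bar>b\<bar> * By"
      using Bx[OF that] By[OF that] by (intro add_mono mult_left_mono) auto
    finally show ?thesis .
  qed
  then show ?thesis unfolding coord_bounded_def by blast
qed

lemma coord_bounded_mult_mat_vec:
  assumes A: "A \<in> carrier_mat k l" and x: "\<And>n. x n \<in> carrier_vec l" and "coord_bounded l x"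
  shows "coord_bounded k (\<lambda>n. A *\<^sub>v x n)"
proof -
  obtain B where B: "\<And>n c. c < l \<Longrightarrow> \<bar>x n $ c\<bar> \<le> B"
    using \<open>coord_bounded l x\<close> unfolding coord_bounded_def by blast
  have "\<bar>(A *\<^sub>v x n) $ j\<bar> \<le> (\<Sum>j<k. \<Sum>c<l. \<bar>A $$ (j, c)\<bar> * \<bar>B\<bar>)" if j: "j < k" for n j
  proof -
    have "\<bar>(A *\<^sub>v x n) $ j\<bar> = \<bar>\<Sum>c<l. A $$ (j, c) * x n $ c\<bar>"
      using A x[of n] j by (simp add: scalar_prod_def atLeast0LessThan)
    also have "\<dots> \<le> (\<Sum>c<l. \<bar>A $$ (j, c)\<bar> * \<bar>B\<bar>)"
      using B by (intro order.trans[OF sum_abs] sum_mono)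
        (auto simp: abs_mult intro!: mult_left_mono order_trans[OF B abs_ge_self])
    also have "\<dots> \<le> (\<Sum>j<k. \<Sum>c<l. \<bar>A $$ (j, c)\<bar> * \<bar>B\<bar>)"
      using j by (intro member_le_sum[where f = "\<lambda>j. \<Sum>c<l. \<bar>A $$ (j, c)\<bar> * \<bar>B\<bar>"] sum_nonneg) auto
    finally show ?thesis .
  qed
  then show ?thesis unfolding coord_bounded_def by blast
qed

lemma coord_bounded_average:
  assumes x: "\<And>n. x n \<in> carrier_vec k" and "coord_bounded k x"
  shows "coord_bounded k (\<lambda>n. a \<cdot>\<^sub>v x n + b \<cdot>\<^sub>v x (Suc n))"
proof (rule coord_bounded_lincomb[where a = a and b = b and y = "\<lambda>n. x (Suc n)"])
  show "coord_bounded k x" "coord_bounded k (\<lambda>n. x (Suc n))"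
    using \<open>coord_bounded k x\<close> coord_bounded_Suc_iff by auto
  show "(a \<cdot>\<^sub>v x n + b \<cdot>\<^sub>v x (Suc n)) $ j = a * x n $ j + b * x (Suc n) $ j" if "j < k" for n j
    using that x[of n] x[of "Suc n"] by simp
qed

lemma (in vec_space) full_rank_cols_span:
  assumes H: "H \<in> carrier_mat n N" and r: "rank H = n" and x: "x \<in> carrier_vec n"
  shows "\<exists>A a. finite A \<and> A \<subseteq> set (cols H) \<and> x = lincomb a A"
proof -
  obtain U where U: "finite U" "maximal U (\<lambda>T. T \<subseteq> set (cols H) \<and> lin_indpt T)"
    using maximal_exists_superset[of "set (cols H)" "\<lambda>T. T \<subseteq> set (cols H) \<and> lin_indpt T" "{}"]
    by (auto simp: lin_dep_def)
  have UH: "U \<subseteq> set (cols H)" "lin_indpt U" using U(2) unfolding maximal_def by auto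
  have "card U = n" using rank_card_indpt[OF H U(2)] r by simp
  moreover have "U \<subseteq> carrier_vec n" using UH(1) cols_dim H by blast
  ultimately have "basis U"
    using U(1) UH(2) by (intro dim_li_is_basis) (auto simp: dim_is_n intro: fin_dim)
  then have "x \<in> span U" using x unfolding basis_def by auto
  then have "x \<in> span (set (cols H))" using span_is_monotone[OF UH(1)] by auto
  then show ?thesis unfolding span_def by auto
qed

lemma (in vec_space) lincomb_scalar_prod:
  assumes A: "finite A" "A \<subseteq> carrier_vec n" and y: "y \<in> carrier_vec n"
  shows "lincomb a A \<bullet> y = (\<Sum>u\<in>A. a u * (u \<bullet> y))"
proof -
  have "lincomb a A \<bullet> y = (\<Sum>i<n. (\<Sum>u\<in>A. a u * u $ i) * y $ i)"
    using A y lincomb_closed[OF A(2)]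
    by (auto simp: scalar_prod_def atLeast0LessThan lincomb_index[OF _ A(2)] intro!: sum.cong)
  also have "\<dots> = (\<Sum>u\<in>A. a u * (\<Sum>i<n. u $ i * y $ i))"
    by (simp add: sum_distrib_left sum_distrib_right mult.assoc sum.swap[of _ A])
  also have "\<dots> = (\<Sum>u\<in>A. a u * (u \<bullet> y))"
    using A y by (auto simp: scalar_prod_def atLeast0LessThan intro!: sum.cong)
  finally show ?thesis .
qed

text \<open>Every coordinate of \<open>\<lambda>\<close> is a fixed linear combination of the products \<open>u \<bullet> \<lambda>\<close>
  with the columns \<open>u\<close>, since the columns of a matrix of full row rank span.\<close>
lemma coord_bounded_if_full_row_rank:
  assumes H: "H \<in> carrier_mat n N" "vec_space.rank n H = n" and lam: "\<And>k. lam k \<in> carrier_vec n"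
    and cols_bounded: "\<And>u. u \<in> set (cols H) \<Longrightarrow> \<exists>B. \<forall>k. \<bar>u \<bullet> lam k\<bar> \<le> B"
  shows "coord_bounded n lam"
proof -
  have "\<forall>u \<in> set (cols H). \<exists>B. \<forall>k. \<bar>u \<bullet> lam k\<bar> \<le> B" using cols_bounded by blast
  then have "\<exists>B. \<forall>u \<in> set (cols H). \<forall>k. \<bar>u \<bullet> lam k\<bar> \<le> B u" by (rule bchoice)
  then obtain B where B: "\<And>u k. u \<in> set (cols H) \<Longrightarrow> \<bar>u \<bullet> lam k\<bar> \<le> B u" by auto
  have "\<forall>j < n. \<exists>A a. finite A \<and> A \<subseteq> set (cols H) \<and>
      unit_vec n j = module.lincomb (module_vec TYPE(real) n) a A"
    using vec_space.full_rank_cols_span[OF H] by simp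
  then obtain A a where A: "\<And>j. j < n \<Longrightarrow> finite (A j) \<and> A j \<subseteq> set (cols H) \<and>
      unit_vec n j = module.lincomb (module_vec TYPE(real) n) (a j) (A j)"
    by metis
  have "\<bar>lam k $ j\<bar> \<le> (\<Sum>j<n. \<Sum>u\<in>A j. \<bar>a j u\<bar> * \<bar>B u\<bar>)" if j: "j < n" for k j
  proof -
    have A_car: "A j \<subseteq> carrier_vec n" using A[OF j] cols_dim H(1) by blast
    have "lam k $ j = unit_vec n j \<bullet> lam k" using lam[of k] j by simp
    also have "\<dots> = (\<Sum>u\<in>A j. a j u * (u \<bullet> lam k))"
      using A[OF j] vec_space.lincomb_scalar_prod[OF _ A_car lam] by auto
    finally have "\<bar>lam k $ j\<bar> \<le> (\<Sum>u\<in>A j. \<bar>a j u\<bar> * \<bar>u \<bullet> lam k\<bar>)"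
      by (simp add: order.trans[OF sum_abs] abs_mult)
    also have "\<dots> \<le> (\<Sum>u\<in>A j. \<bar>a j u\<bar> * \<bar>B u\<bar>)"
      using A[OF j] B by (intro sum_mono mult_left_mono) (auto intro: order_trans[OF _ abs_ge_self])
    also have "\<dots> \<le> (\<Sum>j<n. \<Sum>u\<in>A j. \<bar>a j u\<bar> * \<bar>B u\<bar>)"
      using j by (intro member_le_sum[where f = "\<lambda>j. \<Sum>u\<in>A j. \<bar>a j u\<bar> * \<bar>B u\<bar>"] sum_nonneg) auto
    finally show ?thesis .
  qed
  then show ?thesis unfolding coord_bounded_def by blast
qed

lemma coord_bounded_if_transpose_blocks_bounded:
  assumes C: "\<And>i. i < S \<Longrightarrow> C i \<in> carrier_mat p (m i)"
    and rank: "vec_space.rank p (hblock p S C) = p" and lam: "\<And>n. lam n \<in> carrier_vec p"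
    and bounded: "\<And>i. i < S \<Longrightarrow> coord_bounded (m i) (\<lambda>n. transpose_mat (C i) *\<^sub>v lam n)"
  shows "coord_bounded p lam"
proof -
  define L where "L = concat (map (\<lambda>i. cols (C i)) [0..<S])"
  have L: "set L \<subseteq> carrier_vec p"
  proof
    fix u assume "u \<in> set L"
    then obtain i where "i < S" "u \<in> set (cols (C i))" unfolding L_def by auto
    then show "u \<in> carrier_vec p" using cols_dim[of "C i"] C[of i] by (metis carrier_matD(1) subsetD)
  qed
  have H: "hblock p S C \<in> carrier_mat p (length L)" and cols: "cols (hblock p S C) = L"
    unfolding hblock_def L_def[symmetric] using L by (auto simp: cols_mat_of_cols)
  have cols_bounded: "\<exists>B. \<forall>n. \<bar>u \<bullet> lam n\<bar> \<le> B" if "u \<in> set L" for u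
  proof -
    obtain i where i: "i < S" "u \<in> set (cols (C i))" using \<open>u \<in> set L\<close> unfolding L_def by auto
    then obtain c where c: "c < m i" "u = col (C i) c" using C[OF i(1)] by (auto simp: cols_def)
    obtain B where "\<And>n. \<bar>(transpose_mat (C i) *\<^sub>v lam n) $ c\<bar> \<le> B"
      using bounded[OF i(1)] c(1) unfolding coord_bounded_def by blast
    moreover have "(transpose_mat (C i) *\<^sub>v lam n) $ c = u \<bullet> lam n" for n
      using C[OF i(1)] c by simp
    ultimately show ?thesis by auto
  qed
  show ?thesis
    by (rule coord_bounded_if_full_row_rank[OF H rank lam]) (use cols_bounded in \<open>auto simp: cols\<close>)
qed

section \<open>Energy estimate for the \<open>d\<close>-continuity scheme\<close>

lemma scalar_prod_mult_mat_vec_lincomb: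
  fixes C :: "real mat"
  assumes "C \<in> carrier_mat p m" "lam \<in> carrier_vec p" "x \<in> carrier_vec m" "y \<in> carrier_vec m"
  shows "lam \<bullet> (C *\<^sub>v (a \<cdot>\<^sub>v x + b \<cdot>\<^sub>v y)) = a * (lam \<bullet> (C *\<^sub>v x)) + b * (lam \<bullet> (C *\<^sub>v y))"
  using assms mult_mat_vec[OF assms(1,3)] mult_mat_vec[OF assms(1,4)]
  by (simp add: mult_add_distrib_mat_vec scalar_prod_add_distrib[of _ p] scalar_prod_smult_distrib[of _ p])

lemma scalar_prod_constraint_sum:
  fixes C :: "nat \<Rightarrow> real mat"
  assumes C: "\<And>i. i < S \<Longrightarrow> C i \<in> carrier_mat p (m i)" and x: "\<And>i. i < S \<Longrightarrow> x i \<in> carrier_vec (m i)"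
    and constr: "finsum_vec TYPE(real) p (\<lambda>i. C i *\<^sub>v x i) {..<S} = 0\<^sub>v p"
    and lam: "lam \<in> carrier_vec p"
  shows "(\<Sum>i<S. lam \<bullet> (C i *\<^sub>v x i)) = 0"
proof -
  have Cx: "(\<lambda>i. C i *\<^sub>v x i) \<in> {..<S} \<rightarrow> carrier_vec p" using C x by fastforce
  have "(\<Sum>i<S. lam \<bullet> (C i *\<^sub>v x i)) = (\<Sum>i<S. \<Sum>j<p. lam $ j * (C i *\<^sub>v x i) $ j)"
  proof (rule sum.cong[OF refl])
    fix i assume "i \<in> {..<S}"
    then have "dim_vec (C i *\<^sub>v x i) = p" using C[of i] by auto
    then show "lam \<bullet> (C i *\<^sub>v x i) = (\<Sum>j<p. lam $ j * (C i *\<^sub>v x i) $ j)"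
      by (simp only: scalar_prod_def atLeast0LessThan)
  qed
  also have "\<dots> = (\<Sum>j<p. lam $ j * (\<Sum>i<S. (C i *\<^sub>v x i) $ j))"
    by (simp add: sum_distrib_left sum.swap[of _ "{..<S}"])
  also have "\<dots> = 0"
    using index_finsum_vec[OF _ _ Cx] constr by simp
  finally show ?thesis .
qed

lemma mat_form_eq_motion:
  fixes C :: "real mat"
  assumes M: "M \<in> carrier_mat m m" and K: "K \<in> carrier_mat m m" and C: "C \<in> carrier_mat p m"
    and vecs: "lam \<in> carrier_vec p" "v \<in> carrier_vec m" "\<theta> \<in> carrier_vec m" "y \<in> carrier_vec m"
    and eq: "M *\<^sub>v v + K *\<^sub>v \<theta> = transpose_mat C *\<^sub>v lam"
  shows "mat_form M y v + mat_form K y \<theta> = lam \<bullet> (C *\<^sub>v y)"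
proof -
  have "mat_form M y v + mat_form K y \<theta> = y \<bullet> (M *\<^sub>v v + K *\<^sub>v \<theta>)"
    unfolding mat_form_def using M K vecs by (simp add: scalar_prod_add_distrib[of _ m])
  also have "\<dots> = (transpose_mat C *\<^sub>v lam) \<bullet> y"
    unfolding eq using C vecs by (intro comm_scalar_prod[of _ m]) auto
  also have "\<dots> = lam \<bullet> (C *\<^sub>v y)"
    by (rule transpose_vec_mult_scalar[OF C vecs(4,1)])
  finally show ?thesis .
qed

text \<open>Discrete analogue of \<open>\<langle>M d, d'\<rangle> = (\<langle>M d, d\<rangle>)' / 2\<close>; the defect
  \<open>(\<gamma> - 1/2) \<Delta>t \<langle>M v, v\<rangle>\<close> is the numerical dissipation of the \<open>\<gamma>\<close>-method.\<close>
lemma mat_form_theta_velocity: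
  assumes M: "M \<in> carrier_mat m m" "sym_mat M" and d: "d \<in> carrier_vec m" and v: "v \<in> carrier_vec m"
    and "\<Delta>t \<noteq> 0"
  shows "mat_form M ((1 - \<gamma>) \<cdot>\<^sub>v d + \<gamma> \<cdot>\<^sub>v (d + \<Delta>t \<cdot>\<^sub>v v)) v
    = (mat_form M (d + \<Delta>t \<cdot>\<^sub>v v) (d + \<Delta>t \<cdot>\<^sub>v v) - mat_form M d d) / (2 * \<Delta>t)
      + (\<gamma> - 1/2) * \<Delta>t * mat_form M v v"
proof -
  have "(1 - \<gamma>) \<cdot>\<^sub>v d + \<gamma> \<cdot>\<^sub>v (d + \<Delta>t \<cdot>\<^sub>v v) = d + (\<gamma> * \<Delta>t) \<cdot>\<^sub>v v"
    using d v by (intro eq_vecI) (auto simp: algebra_simps)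
  then have lhs: "mat_form M ((1 - \<gamma>) \<cdot>\<^sub>v d + \<gamma> \<cdot>\<^sub>v (d + \<Delta>t \<cdot>\<^sub>v v)) v
      = mat_form M d v + \<gamma> * \<Delta>t * mat_form M v v"
    using d v by (simp add: mat_form_add_left[OF M(1)] mat_form_smult_left[OF M(1)])
  have "mat_form M (d + \<Delta>t \<cdot>\<^sub>v v) (d + \<Delta>t \<cdot>\<^sub>v v)
      = mat_form M d d + 2 * \<Delta>t * mat_form M d v + \<Delta>t\<^sup>2 * mat_form M v v"
    using mat_form_lincomb_self[OF M d v, of 1 \<Delta>t] d by simp
  then show ?thesis
    unfolding lhs using \<open>\<Delta>t \<noteq> 0\<close> by (simp add: field_simps power2_eq_square)
qed

lemma cross_term_le_omega_max:
  assumes M: "M \<in> carrier_mat m m" "pos_def_mat M" and K: "K \<in> carrier_mat m m" "pos_semidef_mat K"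
    and W: "omega_max K M < W" "0 < W" and v: "v \<in> carrier_vec m" and \<theta>: "\<theta> \<in> carrier_vec m"
  shows "- 2 * mat_form K v \<theta> \<le> mat_form M v v + W * mat_form K \<theta> \<theta>"
proof -
  have "mat_form K v v \<le> omega_max K M * mat_form M v v"
    using K(2) by (intro mat_form_le_omega_max[OF M K(1) _ v]) (simp add: pos_semidef_mat_def)
  also have "\<dots> \<le> W * mat_form M v v"
    using W pos_semidef_mat_form_nonneg[OF M(1) pos_def_mat_imp_pos_semidef_mat[OF M(2)] v]
    by (intro mult_right_mono) auto
  finally have "mat_form K v v / W \<le> mat_form M v v" using W(2) by (simp add: divide_le_eq mult.commute)
  moreover have "- 2 * mat_form K v \<theta> \<le> (1 / W) * mat_form K v v + mat_form K \<theta> \<theta> / (1 / W)"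
    using W(2) by (intro pos_semidef_cross_term_le[OF K v \<theta>]) simp
  ultimately show ?thesis by (simp add: mult.commute)
qed

text \<open>The modified \<open>d\<close>-continuity scheme with zero forcing; \<open>v i n\<close> and \<open>lam n\<close> stand for
  \<open>v\<^sub>i\<^sup>(\<^sup>n\<^sup>+\<^sup>\<gamma>\<^sup>)\<close> and \<open>\<lambda>\<^sup>(\<^sup>n\<^sup>+\<^sup>\<gamma>\<^sup>)\<close>.\<close>
locale d_continuity =
  fixes S p :: nat and m :: "nat \<Rightarrow> nat" and M K C :: "nat \<Rightarrow> real mat" and \<gamma> \<Delta>t :: real
    and d v :: "nat \<Rightarrow> nat \<Rightarrow> real vec" and lam :: "nat \<Rightarrow> real vec"
  assumes M_carrier: "\<And>i. i < S \<Longrightarrow> M i \<in> carrier_mat (m i) (m i)"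
    and K_carrier: "\<And>i. i < S \<Longrightarrow> K i \<in> carrier_mat (m i) (m i)"
    and C_carrier: "\<And>i. i < S \<Longrightarrow> C i \<in> carrier_mat p (m i)"
    and M_pos_def: "\<And>i. i < S \<Longrightarrow> pos_def_mat (M i)"
    and K_pos_semidef: "\<And>i. i < S \<Longrightarrow> pos_semidef_mat (K i)"
    and C_rank: "vec_space.rank p (hblock p S C) = p"
    and dt_pos: "0 < \<Delta>t"
    and cfl: "\<gamma> < 1/2 \<Longrightarrow> \<forall>i < S. \<Delta>t * (1 - 2 * \<gamma>) * omega_max (K i) (M i) < 2"
    and d_carrier: "\<And>i n. i < S \<Longrightarrow> d i n \<in> carrier_vec (m i)"
    and v_carrier: "\<And>i n. i < S \<Longrightarrow> v i n \<in> carrier_vec (m i)"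
    and lam_carrier: "\<And>n. lam n \<in> carrier_vec p"
    and eq_motion: "\<And>i n. i < S \<Longrightarrow>
        M i *\<^sub>v v i n + K i *\<^sub>v ((1 - \<gamma>) \<cdot>\<^sub>v d i n + \<gamma> \<cdot>\<^sub>v d i (Suc n)) = transpose_mat (C i) *\<^sub>v lam n"
    and eq_update: "\<And>i n. i < S \<Longrightarrow> d i (Suc n) = d i n + \<Delta>t \<cdot>\<^sub>v v i n"
    and eq_constr: "\<And>n. finsum_vec TYPE(real) p (\<lambda>i. C i *\<^sub>v d i (Suc n)) {..<S} = 0\<^sub>v p"
begin

definition theta :: "nat \<Rightarrow> nat \<Rightarrow> real vec" where
  "theta i n = (1 - \<gamma>) \<cdot>\<^sub>v d i n + \<gamma> \<cdot>\<^sub>v d i (Suc n)"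

definition energy :: "nat \<Rightarrow> real" where
  "energy n = (\<Sum>i<S. mat_form (M i) (d i n) (d i n))"

lemma theta_carrier: "i < S \<Longrightarrow> theta i n \<in> carrier_vec (m i)"
  unfolding theta_def using d_carrier by auto

lemma M_sym: "i < S \<Longrightarrow> sym_mat (M i)"
  using M_pos_def unfolding pos_def_mat_def by blast

lemma v_eq_difference_quotient: "i < S \<Longrightarrow> v i n = (- 1 / \<Delta>t) \<cdot>\<^sub>v d i n + (1 / \<Delta>t) \<cdot>\<^sub>v d i (Suc n)"
  using eq_update[of i n] d_carrier[of i n] v_carrier[of i n] dt_pos
  by (intro eq_vecI) (auto simp: field_simps)

text \<open>The constraint holds from step \<open>1\<close> on, so the Lagrange multipliers do no work on
  any combination of two consecutive displacements after step \<open>0\<close>.\<close>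
lemma constraint_work_zero:
  "(\<Sum>i<S. lam n \<bullet> (C i *\<^sub>v (a \<cdot>\<^sub>v d i (Suc k) + b \<cdot>\<^sub>v d i (Suc (Suc k))))) = 0"
proof -
  have "(\<Sum>i<S. lam n \<bullet> (C i *\<^sub>v (a \<cdot>\<^sub>v d i (Suc k) + b \<cdot>\<^sub>v d i (Suc (Suc k)))))
      = (\<Sum>i<S. a * (lam n \<bullet> (C i *\<^sub>v d i (Suc k))) + b * (lam n \<bullet> (C i *\<^sub>v d i (Suc (Suc k)))))"
    by (intro sum.cong refl scalar_prod_mult_mat_vec_lincomb[OF C_carrier lam_carrier d_carrier d_carrier])
      auto
  also have "\<dots> = a * (\<Sum>i<S. lam n \<bullet> (C i *\<^sub>v d i (Suc k))) + b * (\<Sum>i<S. lam n \<bullet> (C i *\<^sub>v d i (Suc (Suc k))))"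
    by (simp add: sum.distrib sum_distrib_left)
  also have "\<dots> = 0"
    using scalar_prod_constraint_sum[OF C_carrier d_carrier eq_constr lam_carrier] by simp
  finally show ?thesis .
qed

lemma power_balance:
  "(\<Sum>i<S. mat_form (M i) (theta i (Suc k)) (v i (Suc k))
           + mat_form (K i) (theta i (Suc k)) (theta i (Suc k))) = 0"
proof -
  have "mat_form (M i) (theta i (Suc k)) (v i (Suc k)) + mat_form (K i) (theta i (Suc k)) (theta i (Suc k))
      = lam (Suc k) \<bullet> (C i *\<^sub>v theta i (Suc k))" if "i < S" for i
    using that eq_motion[OF that] theta_carrier[OF that]
    by (intro mat_form_eq_motion[OF M_carrier K_carrier C_carrier lam_carrier v_carrier])
      (auto simp: theta_def)
  then show ?thesis
    using constraint_work_zero[of "Suc k" "1 - \<gamma>" k \<gamma>] by (simp add: theta_def)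
qed

lemma velocity_balance:
  "(\<Sum>i<S. mat_form (M i) (v i (Suc k)) (v i (Suc k))
           + mat_form (K i) (v i (Suc k)) (theta i (Suc k))) = 0"
proof -
  have "mat_form (M i) (v i (Suc k)) (v i (Suc k)) + mat_form (K i) (v i (Suc k)) (theta i (Suc k))
      = lam (Suc k) \<bullet> (C i *\<^sub>v v i (Suc k))" if "i < S" for i
    using that eq_motion[OF that] theta_carrier[OF that]
    by (intro mat_form_eq_motion[OF M_carrier K_carrier C_carrier lam_carrier v_carrier])
      (auto simp: theta_def intro: v_carrier)
  then show ?thesis
    using constraint_work_zero[of "Suc k" "- 1 / \<Delta>t" k "1 / \<Delta>t"] by (simp add: v_eq_difference_quotient)
qed

text \<open>For \<open>\<gamma> < 1/2\<close> the CFL condition says exactly that \<open>W = 1 / ((1/2 - \<gamma>) \<Delta>t)\<close>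
  exceeds every \<open>\<omega>\<^sub>i\<^sup>m\<^sup>a\<^sup>x\<close>, so the cross-term bound applies in every subdomain.\<close>
lemma dissipation_nonneg:
  assumes balance: "(\<Sum>i<S. mat_form (M i) (v i n) (v i n) + mat_form (K i) (v i n) (theta i n)) = 0"
  shows "0 \<le> (\<gamma> - 1/2) * \<Delta>t * (\<Sum>i<S. mat_form (M i) (v i n) (v i n))
              + (\<Sum>i<S. mat_form (K i) (theta i n) (theta i n))"
proof -
  let ?V = "\<Sum>i<S. mat_form (M i) (v i n) (v i n)" and ?Q = "\<Sum>i<S. mat_form (K i) (theta i n) (theta i n)"
  have V: "0 \<le> ?V"
    using M_carrier M_pos_def v_carrier
    by (intro sum_nonneg pos_semidef_mat_form_nonneg pos_def_mat_imp_pos_semidef_mat) auto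
  have Q: "0 \<le> ?Q"
    using K_carrier K_pos_semidef theta_carrier by (intro sum_nonneg pos_semidef_mat_form_nonneg) auto
  show ?thesis
  proof (cases "\<gamma> < 1/2")
    case False
    then show ?thesis using V Q dt_pos by simp
  next
    case True
    define W where "W = 1 / ((1/2 - \<gamma>) * \<Delta>t)"
    have h: "0 < (1/2 - \<gamma>) * \<Delta>t" using True dt_pos by simp
    have "- 2 * mat_form (K i) (v i n) (theta i n)
        \<le> mat_form (M i) (v i n) (v i n) + W * mat_form (K i) (theta i n) (theta i n)" if "i < S" for i
    proof (rule cross_term_le_omega_max[OF M_carrier M_pos_def K_carrier K_pos_semidef])
      have "omega_max (K i) (M i) * ((1/2 - \<gamma>) * \<Delta>t) < 1"
        using cfl[OF True] that by (simp add: algebra_simps)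
      then show "omega_max (K i) (M i) < W" unfolding W_def using h by (simp add: less_divide_eq)
    qed (use that h v_carrier theta_carrier in \<open>auto simp: W_def\<close>)
    then have "(\<Sum>i<S. - 2 * mat_form (K i) (v i n) (theta i n))
        \<le> (\<Sum>i<S. mat_form (M i) (v i n) (v i n) + W * mat_form (K i) (theta i n) (theta i n))"
      by (intro sum_mono) auto
    then have "- 2 * (\<Sum>i<S. mat_form (K i) (v i n) (theta i n)) \<le> ?V + W * ?Q"
      by (simp add: sum_distrib_left sum.distrib)
    then have "?V \<le> W * ?Q" using balance by (simp add: sum.distrib)
    then have "(1/2 - \<gamma>) * \<Delta>t * ?V \<le> ?Q"
      using h by (simp add: W_def field_simps)
    then show ?thesis by (simp add: algebra_simps)
  qed
qed

lemma energy_Suc_le: "energy (Suc (Suc k)) \<le> energy (Suc k)"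
proof -
  let ?n = "Suc k"
  let ?V = "\<Sum>i<S. mat_form (M i) (v i ?n) (v i ?n)" and ?Q = "\<Sum>i<S. mat_form (K i) (theta i ?n) (theta i ?n)"
  have "mat_form (M i) (theta i ?n) (v i ?n)
      = (mat_form (M i) (d i (Suc ?n)) (d i (Suc ?n)) - mat_form (M i) (d i ?n) (d i ?n)) / (2 * \<Delta>t)
        + (\<gamma> - 1/2) * \<Delta>t * mat_form (M i) (v i ?n) (v i ?n)" if "i < S" for i
    unfolding theta_def eq_update[OF that, of ?n]
    using that dt_pos by (intro mat_form_theta_velocity[OF M_carrier M_sym d_carrier v_carrier]) auto
  then have "(\<Sum>i<S. mat_form (M i) (theta i ?n) (v i ?n))
      = (energy (Suc ?n) - energy ?n) / (2 * \<Delta>t) + (\<gamma> - 1/2) * \<Delta>t * ?V"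
    unfolding energy_def
    by (simp add: sum.distrib sum_distrib_left sum_divide_distrib[symmetric] sum_subtractf)
  moreover have "(\<Sum>i<S. mat_form (M i) (theta i ?n) (v i ?n)) = - ?Q"
    using power_balance[of k] by (simp add: sum.distrib)
  moreover have "0 \<le> (\<gamma> - 1/2) * \<Delta>t * ?V + ?Q"
    by (rule dissipation_nonneg[OF velocity_balance])
  ultimately have "(energy (Suc ?n) - energy ?n) / (2 * \<Delta>t) \<le> 0" by linarith
  then show ?thesis using dt_pos by (simp add: divide_le_0_iff)
qed

lemma energy_le: "energy (Suc n) \<le> energy 1"
  by (induction n) (auto intro: order_trans[OF energy_Suc_le])

lemma d_coord_bounded: "i < S \<Longrightarrow> coord_bounded (m i) (d i)"
proof -
  assume i: "i < S"
  obtain c where c: "0 < c" "\<And>x. x \<in> carrier_vec (m i) \<Longrightarrow> x \<bullet> x \<le> c * mat_form (M i) x x"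
    using pos_def_mat_coercive[OF M_carrier[OF i] M_pos_def[OF i]] by blast
  have "d i (Suc n) \<bullet> d i (Suc n) \<le> c * energy 1" for n
  proof -
    have "mat_form (M i) (d i (Suc n)) (d i (Suc n)) \<le> energy (Suc n)"
      unfolding energy_def using i M_carrier M_pos_def d_carrier
      by (intro member_le_sum[where f = "\<lambda>i. mat_form (M i) (d i (Suc n)) (d i (Suc n))"]
          pos_semidef_mat_form_nonneg pos_def_mat_imp_pos_semidef_mat) auto
    then show ?thesis
      using c d_carrier[OF i] energy_le[of n] by (smt (verit) mult_left_mono)
  qed
  then have "coord_bounded (m i) (\<lambda>n. d i (Suc n))"
    using d_carrier[OF i] by (intro coord_bounded_if_scalar_prod_self_bounded)
  then show ?thesis by (simp add: coord_bounded_Suc_iff)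
qed

lemma v_coord_bounded: "i < S \<Longrightarrow> coord_bounded (m i) (v i)"
proof -
  assume i: "i < S"
  have "v i = (\<lambda>n. (- 1 / \<Delta>t) \<cdot>\<^sub>v d i n + (1 / \<Delta>t) \<cdot>\<^sub>v d i (Suc n))"
    using v_eq_difference_quotient[OF i] by (intro ext)
  then show ?thesis using coord_bounded_average[OF d_carrier[OF i] d_coord_bounded[OF i]] by simp
qed

lemma theta_coord_bounded: "i < S \<Longrightarrow> coord_bounded (m i) (theta i)"
proof -
  assume i: "i < S"
  have "theta i = (\<lambda>n. (1 - \<gamma>) \<cdot>\<^sub>v d i n + \<gamma> \<cdot>\<^sub>v d i (Suc n))"
    unfolding theta_def by (intro ext) simp
  then show ?thesis using coord_bounded_average[OF d_carrier[OF i] d_coord_bounded[OF i]] by simp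
qed

lemma lam_coord_bounded: "coord_bounded p lam"
proof (rule coord_bounded_if_transpose_blocks_bounded[OF C_carrier C_rank lam_carrier])
  fix i assume i: "i < S"
  show "coord_bounded (m i) (\<lambda>n. transpose_mat (C i) *\<^sub>v lam n)"
  proof (rule coord_bounded_lincomb[where a = 1 and b = 1])
    show "coord_bounded (m i) (\<lambda>n. M i *\<^sub>v v i n)"
      by (rule coord_bounded_mult_mat_vec[OF M_carrier[OF i] v_carrier[OF i] v_coord_bounded[OF i]])
    show "coord_bounded (m i) (\<lambda>n. K i *\<^sub>v theta i n)"
      by (rule coord_bounded_mult_mat_vec[OF K_carrier[OF i] theta_carrier[OF i] theta_coord_bounded[OF i]])
    fix n j assume "j < m i"
    then show "(transpose_mat (C i) *\<^sub>v lam n) $ j = 1 * (M i *\<^sub>v v i n) $ j + 1 * (K i *\<^sub>v theta i n) $ j"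
      unfolding eq_motion[OF i, symmetric] theta_def[symmetric] using M_carrier[OF i] K_carrier[OF i] by simp
  qed
qed

end

theorem mainTheorem3:
  fixes S p :: nat and m :: "nat \<Rightarrow> nat"
    and M K C :: "nat \<Rightarrow> real mat"
    and \<gamma> \<Delta>t :: real
    and d vg :: "nat \<Rightarrow> nat \<Rightarrow> real vec"
    and lg :: "nat \<Rightarrow> real vec"
    and v1 :: "nat \<Rightarrow> nat \<Rightarrow> real vec"
    and l1 :: "nat \<Rightarrow> real vec"
  assumes S_pos: "S \<ge> 1"
    and M_car: "\<And>i. i < S \<Longrightarrow> M i \<in> carrier_mat (m i) (m i)"
    and K_car: "\<And>i. i < S \<Longrightarrow> K i \<in> carrier_mat (m i) (m i)"
    and C_car: "\<And>i. i < S \<Longrightarrow> C i \<in> carrier_mat p (m i)"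
    and M_pd: "\<And>i. i < S \<Longrightarrow> pos_def_mat (M i)"
    and K_psd: "\<And>i. i < S \<Longrightarrow> pos_semidef_mat (K i)"
    and C_sb: "\<And>i. i < S \<Longrightarrow> signed_boolean_mat (C i)"
    and C_rank: "vec_space.rank p (hblock p S C) = p"
    and gamma: "0 < \<gamma>" "\<gamma> \<le> 1"
    and dt: "\<Delta>t > 0"
    and cfl: "\<gamma> < 1/2 \<Longrightarrow> \<forall>i < S. \<Delta>t * (1 - 2*\<gamma>) * omega_max (K i) (M i) < 2"
    and d_car: "\<And>i n. i < S \<Longrightarrow> d i n \<in> carrier_vec (m i)"
    and vg_car: "\<And>i n. i < S \<Longrightarrow> vg i n \<in> carrier_vec (m i)"
    and lg_car: "\<And>n. lg n \<in> carrier_vec p"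
    and eq_motion: "\<And>i n. i < S \<Longrightarrow>
        M i *\<^sub>v vg i n + K i *\<^sub>v ((1 - \<gamma>) \<cdot>\<^sub>v d i n + \<gamma> \<cdot>\<^sub>v d i (Suc n))
          = transpose_mat (C i) *\<^sub>v lg n"
    and eq_update: "\<And>i n. i < S \<Longrightarrow> d i (Suc n) = d i n + \<Delta>t \<cdot>\<^sub>v vg i n"
    and eq_constr: "\<And>n. finsum_vec TYPE(real) p (\<lambda>i. C i *\<^sub>v d i (Suc n)) {..<S} = 0\<^sub>v p"
    and v1_def: "\<And>i n. v1 i n = \<gamma> \<cdot>\<^sub>v vg i n + (1 - \<gamma>) \<cdot>\<^sub>v vg i (Suc n)"
    and l1_def: "\<And>n. l1 n = \<gamma> \<cdot>\<^sub>v lg n + (1 - \<gamma>) \<cdot>\<^sub>v lg (Suc n)"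
  shows "(\<forall>i < S. bounded_seq (d i) \<and> bounded_seq (vg i) \<and> bounded_seq (v1 i))
         \<and> bounded_seq lg \<and> bounded_seq l1"
proof -
  interpret d_continuity S p m M K C \<gamma> \<Delta>t d vg lg
    using M_car K_car C_car M_pd K_psd C_rank dt cfl d_car vg_car lg_car eq_motion eq_update eq_constr
    by unfold_locales auto
  have v1_eq: "v1 i = (\<lambda>n. \<gamma> \<cdot>\<^sub>v vg i n + (1 - \<gamma>) \<cdot>\<^sub>v vg i (Suc n))" for i
    using v1_def by (intro ext)
  have l1_eq: "l1 = (\<lambda>n. \<gamma> \<cdot>\<^sub>v lg n + (1 - \<gamma>) \<cdot>\<^sub>v lg (Suc n))"
    using l1_def by (intro ext)
  have "bounded_seq (d i) \<and> bounded_seq (vg i) \<and> bounded_seq (v1 i)" if i: "i < S" for i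
    using bounded_seq_if_coord_bounded[OF d_car d_coord_bounded] bounded_seq_if_coord_bounded[OF vg_car v_coord_bounded]
      bounded_seq_if_coord_bounded[OF _ coord_bounded_average[OF vg_car v_coord_bounded]] vg_car i
    unfolding v1_eq by auto
  moreover have "bounded_seq lg" "bounded_seq l1"
    using bounded_seq_if_coord_bounded[OF lg_car lam_coord_bounded]
      bounded_seq_if_coord_bounded[OF _ coord_bounded_average[OF lg_car lam_coord_bounded]] lg_car
    unfolding l1_eq by auto
  ultimately show ?thesis by blast
qed

end
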